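(* For every Baire metric space $X$, $dis(X)\geq\Delta(X)$.
   Context: $dis(X)$ denotes the least cardinal $\tau$ such that $X$ is the union of $\tau$ discrete subspaces. $\Delta(X)$ is the least cardinality of a non-empty open subset of $X$. *)

theory Defs
  imports "HOL-Analysis.Analysis"
begin

definition Baire_space :: "'a topology \<Rightarrow> bool" where
  "Baire_space X \<longleftrightarrow>
     (\<forall>\<G>. countable \<G> \<and> (\<forall>T\<in>\<G>. openin X T \<and> X closure_of T = topspace X)
          \<longrightarrow> X closure_of \<Inter>\<G> = topspace X)"

definition discrete_subspace :: "'a topology \<Rightarrow> 'a set \<Rightarrow> bool" where
  "discrete_subspace X D \<longleftrightarrow> D \<subseteq> topspace X \<and> subtopology X D = discrete_topology D"

end

theory Submission
  imports Defs
begin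

(* Every discrete D splits into the countably many "separated parts"
   D_n = {x \<in> D. every other point of D is at distance \<ge> 1/(n+1) from x}.
   The sets E_n = \<Union>D\<in>\<D>. D_n cover X, so by the Baire property some closure of E_n has
   non-empty interior; inside it we choose a ball B of radius \<rho> with 2\<rho> \<le> 1/(n+1).
   Each D_n meets B in at most one point, hence F = B \<inter> E_n satisfies |F| \<le> |\<D>|,
   and F is dense in B. If \<D> is finite, F is a finite, hence closed, dense subset of B,
   so B = F. If \<D> is infinite, a point y \<in> B lying in some D_m is determined by
   (D, m, s) for any s \<in> F with d(y,s) < 1/(2(m+1)), so |B| \<le> |\<D> \<times> \<nat> \<times> F| = |\<D>|. *)

unbundle cardinal_syntax

definition separated_part :: "('a \<Rightarrow> 'a \<Rightarrow> real) \<Rightarrow> 'a set \<Rightarrow> nat \<Rightarrow> 'a set" where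
  "separated_part d D n = {x \<in> D. \<forall>y\<in>D. y \<noteq> x \<longrightarrow> 1 / real (Suc n) \<le> d x y}"

lemma separated_part_close_eq:
  assumes "a \<in> separated_part d D n" "b \<in> separated_part d D n" "d a b < 1 / real (Suc n)"
  shows "a = b"
  using assms unfolding separated_part_def by force

text \<open>A discrete subspace of a metric space is the union of its separated parts:
  each of its points is isolated by some ball of radius 1/(n+1).\<close>
lemma (in Metric_space) discrete_subspace_separated_part:
  assumes "discrete_subspace mtopology D" "x \<in> D"
  shows "\<exists>n. x \<in> separated_part d D n"
proof -
  have DM: "D \<subseteq> M" and eq: "subtopology mtopology D = discrete_topology D"
    using assms(1) unfolding discrete_subspace_def by auto
  have "openin (subtopology mtopology D) {x}" using eq assms(2) by simp
  then obtain T where T: "openin mtopology T" "{x} = T \<inter> D"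
    by (auto simp: openin_subtopology)
  then obtain r where r: "r > 0" "mball x r \<subseteq> T"
    using openin_mtopology by blast
  obtain n :: nat where n: "1 / real (Suc n) < r"
    using r(1) nat_approx_posE by blast
  have "1 / real (Suc n) \<le> d x y" if "y \<in> D" "y \<noteq> x" for y
  proof (rule ccontr)
    assume "\<not> ?thesis"
    then have "y \<in> mball x r" using n that DM assms(2) by auto
    then show False using T r that by auto
  qed
  then show ?thesis using assms(2) unfolding separated_part_def by blast
qed

lemma Baire_space_countable_cover:
  assumes "Baire_space X" "topspace X \<noteq> {}" "topspace X \<subseteq> (\<Union>n::nat. E n)"
  shows "\<exists>n. X interior_of (X closure_of E n) \<noteq> {}"
proof (rule ccontr)
  assume "\<not> ?thesis"
  then have no_interior: "X interior_of (X closure_of E n) = {}" for n by blast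
  define \<G> where "\<G> = range (\<lambda>n. topspace X - X closure_of E n)"
  have "X closure_of (topspace X - X closure_of E n) = topspace X" for n
    unfolding closure_of_complement no_interior by simp
  then have "\<forall>T\<in>\<G>. openin X T \<and> X closure_of T = topspace X"
    unfolding \<G>_def by auto
  moreover have "countable \<G>" unfolding \<G>_def by simp
  ultimately have "X closure_of \<Inter>\<G> = topspace X"
    using assms(1) unfolding Baire_space_def by blast
  moreover have "\<Inter>\<G> = {}"
  proof (rule equals0I)
    fix y assume y: "y \<in> \<Inter>\<G>"
    then have "y \<in> topspace X" unfolding \<G>_def by blast
    then obtain n where "y \<in> E n" using assms(3) by blast
    then have "y \<in> X closure_of E n" using \<open>y \<in> topspace X\<close> closure_of_subset_Int by fast
    then show False using y unfolding \<G>_def by blast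
  qed
  ultimately show False using assms(2) by simp
qed

lemma (in Metric_space) Baire_small_ball_in_closure:
  assumes "Baire_space mtopology" "M \<noteq> {}" "M \<subseteq> (\<Union>n::nat. E n)"
  obtains n x \<rho> where "x \<in> M" "0 < \<rho>" "2 * \<rho> \<le> 1 / real (Suc n)"
    "mball x \<rho> \<subseteq> mtopology closure_of E n"
proof -
  have "\<exists>n. mtopology interior_of (mtopology closure_of E n) \<noteq> {}"
    using Baire_space_countable_cover[OF assms(1)] assms(2,3) by simp
  then obtain n x where x: "x \<in> mtopology interior_of (mtopology closure_of E n)"
    by blast
  then obtain r where r: "r > 0" "mball x r \<subseteq> mtopology closure_of E n"
    using openin_mtopology[of "mtopology interior_of (mtopology closure_of E n)"]
    by (meson interior_of_subset openin_interior_of subset_trans)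
  define \<rho> where "\<rho> = min r (1 / (2 * real (Suc n)))"
  have xM: "x \<in> M" using x interior_of_subset_topspace by fastforce
  have \<rho>: "0 < \<rho>" "\<rho> \<le> r" using r(1) unfolding \<rho>_def by auto
  have "\<rho> \<le> 1 / (2 * real (Suc n))" unfolding \<rho>_def by linarith
  then have sep: "2 * \<rho> \<le> 1 / real (Suc n)" by (simp add: field_simps)
  have "mball x \<rho> \<subseteq> mtopology closure_of E n"
    using r(2) mball_subset_concentric[OF \<rho>(2)] by blast
  then show ?thesis by (rule that[OF xM \<rho>(1) sep])
qed

lemma (in Metric_space) card_small_ball_separated:
  assumes "2 * \<rho> \<le> 1 / real (Suc n)" "F \<subseteq> mball x \<rho>"
    and "\<And>y. y \<in> F \<Longrightarrow> \<exists>D\<in>\<D>. y \<in> separated_part d D n"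
  shows "|F| \<le>o |\<D>|"
proof -
  obtain f where f: "\<And>y. y \<in> F \<Longrightarrow> f y \<in> \<D> \<and> y \<in> separated_part d (f y) n"
    using assms(3) by metis
  have "inj_on f F"
  proof (rule inj_onI)
    fix a b assume ab: "a \<in> F" "b \<in> F" "f a = f b"
    have "d a b \<le> d a x + d x b" using ab assms(2) by (intro triangle) auto
    also have "\<dots> < 2 * \<rho>"
      using ab assms(2) commute[of a x] by (smt (verit, best) in_mball subsetD)
    finally show "a = b"
      using f[OF ab(1)] f[OF ab(2)] ab(3) assms(1) separated_part_close_eq by fastforce
  qed
  moreover have "f ` F \<subseteq> \<D>" using f by auto
  ultimately show ?thesis using card_of_ordLeq by blast
qed

text \<open>If every point of B lies in some separated part of a member of \<D> and F is dense
  in B, then a point y of B is determined by such a part (D, m) together with any point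
  of F at distance less than 1/(2(m+1)) from y.\<close>
lemma (in Metric_space) card_le_dense_separated:
  assumes "\<And>y. y \<in> B \<Longrightarrow> \<exists>D\<in>\<D>. \<exists>m. y \<in> separated_part d D m"
    and "B \<subseteq> mtopology closure_of F" "F \<subseteq> M"
  shows "|B| \<le>o |\<D> \<times> (UNIV :: nat set) \<times> F|"
proof -
  define label where "label y = (\<lambda>(D, m, s). D \<in> \<D> \<and> s \<in> F
      \<and> y \<in> separated_part d D m \<and> d y s < 1 / (2 * real (Suc m)))" for y
  have BM: "B \<subseteq> M" using assms(2) closure_of_subset_topspace[of mtopology F] by simp
  have "\<forall>y\<in>B. \<exists>t. label y t"
  proof
    fix y assume "y \<in> B"
    obtain D m where D: "D \<in> \<D>" "y \<in> separated_part d D m" using assms(1) \<open>y \<in> B\<close> by blast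
    have dense: "\<forall>e>0. \<exists>s\<in>F. s \<in> mball y e"
      using assms(2) \<open>y \<in> B\<close> by (auto simp: metric_closure_of)
    have "1 / (2 * real (Suc m)) > 0" by simp
    then have "\<exists>s\<in>F. s \<in> mball y (1 / (2 * real (Suc m)))" using dense by blast
    then obtain s where "s \<in> F" "d y s < 1 / (2 * real (Suc m))" by auto
    then show "\<exists>t. label y t" using D unfolding label_def by blast
  qed
  then obtain g where g: "\<And>y. y \<in> B \<Longrightarrow> label y (g y)" using bchoice[of B label] by blast
  have "inj_on g B"
  proof (rule inj_onI)
    fix a b assume a: "a \<in> B" and b: "b \<in> B" and gab: "g a = g b"
    obtain D m s where gt: "g a = (D, m, s)" using prod_cases3 by blast
    have la: "label a (D, m, s)" and lb: "label b (D, m, s)"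
      using g[OF a] g[OF b] gt gab by simp_all
    have "s \<in> M" using la assms(3) unfolding label_def by auto
    then have "d a b \<le> d a s + d s b" using a b BM triangle by blast
    moreover have "d a s < 1 / (2 * real (Suc m))" "d s b < 1 / (2 * real (Suc m))"
      using la lb commute[of s b] unfolding label_def by auto
    ultimately have "d a b < 1 / (2 * real (Suc m)) + 1 / (2 * real (Suc m))" by linarith
    also have "\<dots> = 1 / real (Suc m)" by (simp add: field_simps)
    finally have "d a b < 1 / real (Suc m)" .
    then show "a = b"
      using la lb separated_part_close_eq unfolding label_def by auto
  qed
  moreover have "g ` B \<subseteq> \<D> \<times> (UNIV :: nat set) \<times> F"
    using g unfolding label_def by fastforce
  ultimately show ?thesis using card_of_ordLeq by blast
qed

text \<open>In a metric space a finite set is closed, so a finite set dense in B contains B.\<close>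
lemma (in Metric_space) finite_dense_subset:
  assumes "finite F" "F \<subseteq> M" "B \<subseteq> mtopology closure_of F"
  shows "B \<subseteq> F"
  using assms closure_of_closedin t1_space_closedin_finite t1_space_mtopology
  by (metis topspace_mtopology)

lemma card_Times_nat_le_infinite:
  assumes "infinite \<D>" "|F| \<le>o |\<D>|"
  shows "|\<D> \<times> (UNIV :: nat set) \<times> F| \<le>o |\<D>|"
proof -
  have field: "\<not> finite (Field (card_of \<D>))" using assms(1) by (simp add: Field_card_of)
  have "|UNIV :: nat set| \<le>o |\<D>|" using assms(1) infinite_iff_card_of_nat by blast
  then have "|(UNIV :: nat set) \<times> F| \<le>o |\<D>|"
    by (rule card_of_Times_ordLeq_infinite_Field[OF field _ assms(2) card_of_Card_order])
  then show ?thesis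
    by (rule card_of_Times_ordLeq_infinite_Field[OF field ordLeq_refl[OF card_of_Card_order] _
          card_of_Card_order])
qed

theorem mainTheorem3:
  fixes M :: "'a set" and d :: "'a \<Rightarrow> 'a \<Rightarrow> real"
  assumes "Metric_space M d"
    and "M \<noteq> {}"
    and "Baire_space (Metric_space.mtopology M d)"
  shows "\<forall>\<D> :: 'a set set.
           (\<forall>D\<in>\<D>. discrete_subspace (Metric_space.mtopology M d) D) \<and> \<Union>\<D> = M
           \<longrightarrow> (\<exists>U. openin (Metric_space.mtopology M d) U \<and> U \<noteq> {}
                   \<and> (card_of U, card_of \<D>) \<in> ordLeq)"
proof (intro allI impI)
  fix \<D> :: "'a set set"
  assume H: "(\<forall>D\<in>\<D>. discrete_subspace (Metric_space.mtopology M d) D) \<and> \<Union>\<D> = M"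
  interpret Metric_space M d by fact
  have parts: "\<exists>D\<in>\<D>. \<exists>m. y \<in> separated_part d D m" if "y \<in> M" for y
    using H that discrete_subspace_separated_part by blast
  define E where "E n = (\<Union>D\<in>\<D>. separated_part d D n)" for n
  have "M \<subseteq> (\<Union>n. E n)" using parts unfolding E_def by blast
  then obtain n x \<rho> where x: "x \<in> M" and \<rho>: "0 < \<rho>" "2 * \<rho> \<le> 1 / real (Suc n)"
      and ball: "mball x \<rho> \<subseteq> mtopology closure_of E n"
    by (rule Baire_small_ball_in_closure[OF assms(3,2)])
  define B where "B = mball x \<rho>"
  define F where "F = B \<inter> E n"
  have B_open: "openin mtopology B" and B_ne: "B \<noteq> {}" and B_M: "B \<subseteq> M"
    using x \<rho>(1) unfolding B_def by auto
  have F_dense: "B \<subseteq> mtopology closure_of F"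
    using ball openin_Int_closure_of_subset[OF B_open, of "E n"] unfolding F_def B_def by blast
  have F_M: "F \<subseteq> M" using B_M unfolding F_def by blast
  have F_le: "|F| \<le>o |\<D>|"
    by (rule card_small_ball_separated[OF \<rho>(2)]) (auto simp: F_def B_def E_def)
  have "|B| \<le>o |\<D>|"
  proof (cases "finite \<D>")
    case True
    then have "B \<subseteq> F"
      using finite_dense_subset[OF _ F_M F_dense] card_of_ordLeq_finite[OF F_le] by blast
    then show ?thesis using F_le card_of_mono1 ordLeq_transitive by blast
  next
    case False
    have "|B| \<le>o |\<D> \<times> (UNIV :: nat set) \<times> F|"
      using card_le_dense_separated[OF _ F_dense F_M] parts B_M by blast
    then show ?thesis using card_Times_nat_le_infinite[OF False F_le] ordLeq_transitive by blast
  qed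
  then show "\<exists>U. openin mtopology U \<and> U \<noteq> {} \<and> |U| \<le>o |\<D>|" using B_open B_ne by blast
qed

end
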